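(* Let $\Omega\subseteq\mathbb{R}^n$ be open, $u:\Omega\to\mathbb{R}^N$ continuous, $x\in\Omega$, $\xi\in\mathbb{S}^{N-1}$ and $P\in\mathbb{R}^{N\times n}$. The following are equivalent: (i) $P\in J^{1,\xi}u(x)$; (ii) there exists an increasing $\sigma\in C^1(0,\infty)$ with $\sigma(0^+)=0$ such that, as $z\to0$, $$\xi^\top\big(u(z+x)-u(x)-Pz\big)\le-\frac{|\xi^\perp(u(z+x)-u(x)-Pz)|^2}{\sigma(|z|)|z|}+\sigma(|z|)|z|.$$
   Context: For $a,b\in\mathbb{R}^N$, $a\vee b:=\frac12(a\otimes b+b\otimes a)$; matrix inequalities are in the sense of quadratic forms; $\xi^\perp:=I-\xi\otimes\xi$. First contact jet: $J^{1,\xi}u(x)$ is the set of $P\in\mathbb{R}^{N\times n}$ for which there is a continuous $T:\mathbb{R}^n\setminus\{0\}\to\mathbb{R}^{N\times N}_s$ (symmetric matrices) with $|T(y)|\to0$ as $y\to0$ and $\xi\vee[u(z)-u(x)-P(z-x)]\le|z-x|\,T(z-x)$ for all $z\ne x$ near $x$. "As $z\to0$" means for all $z\neq 0$ sufficiently small. *)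

theory Defs
  imports "HOL-Analysis.Analysis"
begin

definition outer :: "real^'m \<Rightarrow> real^'k \<Rightarrow> real^'k^'m" where
  "outer a b = (\<chi> i j. a $ i * b $ j)"

definition sym_prod :: "real^'m \<Rightarrow> real^'m \<Rightarrow> real^'m^'m" where
  "sym_prod a b = (1/2) *\<^sub>R (outer a b + outer b a)"

definition mat_le :: "real^'m^'m \<Rightarrow> real^'m^'m \<Rightarrow> bool" where
  "mat_le A B \<longleftrightarrow> (\<forall>v. v \<bullet> (A *v v) \<le> v \<bullet> (B *v v))"

definition perp :: "real^'m \<Rightarrow> real^'m^'m" where
  "perp \<xi> = mat 1 - outer \<xi> \<xi>"

text \<open>First contact jet J^{1,xi} u(x); matrices P have N rows ('m) and n columns ('n).\<close>
definition jet1 :: "real^'m \<Rightarrow> (real^'n \<Rightarrow> real^'m) \<Rightarrow> real^'n \<Rightarrow> (real^'n^'m) set" where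
  "jet1 \<xi> u x = {P. \<exists>T :: real^'n \<Rightarrow> real^'m^'m.
      (\<forall>y. y \<noteq> 0 \<longrightarrow> transpose (T y) = T y) \<and>
      continuous_on (UNIV - {0}) T \<and>
      (T \<longlongrightarrow> 0) (at 0) \<and>
      (\<forall>\<^sub>F z in at x. mat_le (sym_prod \<xi> (u z - u x - P *v (z - x))) (norm (z - x) *\<^sub>R T (z - x)))}"

end

theory Submission
  imports Defs
begin

(*
  Write w = u(z + x) - u x - P z = a \<xi> + b with b orthogonal to \<xi>, and a test vector
  v = \<alpha> \<xi> + p likewise.  The quadratic form of \<xi> \<or> w at v is \<alpha> (a \<alpha> + b \<bullet> p), and by
  AM-GM it is bounded by \<eta> |v|^2 as soon as a \<le> \<eta> - |b|^2 / \<eta>; conversely, testing with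
  v = \<xi> + (2 / \<eta>) b shows that a bound by (\<eta> / 4) |v|^2 forces that scalar inequality.
  With \<eta> = \<sigma>(|z|) |z| this turns the scalar condition into the jet condition with
  T(y) = \<sigma>(|y|) I, and the jet condition into the scalar one once \<sigma>(|y|) \<ge> 4 |T(y)|.
  The only analytic point is to dominate the modulus 4 |T(y)| by a strictly increasing C^1
  function \<sigma> with \<sigma>(0+) = 0: replacing each value 4 |T(y)| by a ramp of slope
  4 |T(y)| / |y| makes the supremum h of the ramps continuous, and
  \<sigma>(t) = t^-1 \<integral>_0^2t h + t is C^1, strictly increasing and at least h(t).
  Only the behaviour of u near x enters.
*)

lemma outer_mult_vector: "outer a b *v v = (b \<bullet> v) *\<^sub>R a"
  by (simp add: vec_eq_iff outer_def matrix_vector_mult_def inner_vec_def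
      sum_distrib_left mult.left_commute mult.commute)

lemma sym_prod_quadratic_form: "v \<bullet> (sym_prod a b *v v) = (a \<bullet> v) * (b \<bullet> v)"
  by (simp add: sym_prod_def outer_mult_vector scaleR_matrix_vector_assoc[symmetric]
      algebra_simps inner_commute)

lemma perp_mult_vector: "perp \<xi> *v w = w - (\<xi> \<bullet> w) *\<^sub>R \<xi>"
  by (simp add: perp_def outer_mult_vector matrix_vector_mult_diff_rdistrib)

lemma norm_matrix_vector_mult_le: "norm ((A :: real^'n^'m) *v v) \<le> norm A * norm v"
proof -
  have "(norm (A *v v))\<^sup>2 = (\<Sum>i\<in>UNIV. (A $ i \<bullet> v)\<^sup>2)"
    by (simp add: matrix_mult_dot norm_vec_def L2_set_def sum_nonneg)
  also have "\<dots> \<le> (\<Sum>i\<in>UNIV. (norm (A $ i))\<^sup>2 * (norm v)\<^sup>2)"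
    by (intro sum_mono) (metis Cauchy_Schwarz_ineq2 abs_le_square_iff abs_mult abs_norm_cancel power_mult_distrib)
  also have "\<dots> = (norm A * norm v)\<^sup>2"
    by (simp add: norm_vec_def L2_set_def sum_distrib_right power_mult_distrib sum_nonneg)
  finally show ?thesis
    by (rule power2_le_imp_le) simp
qed

lemma quadratic_form_le_norm: "v \<bullet> ((A :: real^'n^'n) *v v) \<le> norm A * (norm v)\<^sup>2"
proof -
  have "v \<bullet> (A *v v) \<le> norm v * norm (A *v v)"
    by (simp add: norm_cauchy_schwarz)
  also have "\<dots> \<le> norm v * (norm A * norm v)"
    by (intro mult_left_mono norm_matrix_vector_mult_le) simp
  finally show ?thesis
    by (simp add: power2_eq_square mult_ac)
qed

lemma inner_unit_decomposition:
  fixes \<xi> v w :: "'a::real_inner"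
  assumes "norm \<xi> = 1"
  shows "w \<bullet> v = (\<xi> \<bullet> w) * (\<xi> \<bullet> v) + (w - (\<xi> \<bullet> w) *\<^sub>R \<xi>) \<bullet> (v - (\<xi> \<bullet> v) *\<^sub>R \<xi>)"
proof -
  have "\<xi> \<bullet> \<xi> = 1"
    using assms by (simp add: norm_eq_1)
  then show ?thesis
    by (simp add: inner_commute algebra_simps)
qed

lemma norm_unit_decomposition:
  fixes \<xi> v :: "'a::real_inner"
  assumes "norm \<xi> = 1"
  shows "(norm v)\<^sup>2 = (\<xi> \<bullet> v)\<^sup>2 + (norm (v - (\<xi> \<bullet> v) *\<^sub>R \<xi>))\<^sup>2"
  using inner_unit_decomposition[OF assms, of v v] unfolding power2_norm_eq_inner
  by (simp add: power2_eq_square)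

lemma form_bound_if_contact_ineq:
  fixes \<xi> w v :: "'a::real_inner"
  assumes \<xi>: "norm \<xi> = 1" and \<eta>: "0 < \<eta>"
    and contact: "\<xi> \<bullet> w \<le> - ((norm (w - (\<xi> \<bullet> w) *\<^sub>R \<xi>))\<^sup>2 / \<eta>) + \<eta>"
  shows "(\<xi> \<bullet> v) * (w \<bullet> v) \<le> \<eta> * (norm v)\<^sup>2"
proof -
  define a b \<alpha> p where "a = \<xi> \<bullet> w" and "b = norm (w - a *\<^sub>R \<xi>)"
    and "\<alpha> = \<xi> \<bullet> v" and "p = norm (v - \<alpha> *\<^sub>R \<xi>)"
  define c where "c = (w - a *\<^sub>R \<xi>) \<bullet> (v - \<alpha> *\<^sub>R \<xi>)"
  have "(\<xi> \<bullet> v) * (w \<bullet> v) = \<alpha> * (a * \<alpha>) + \<alpha> * c"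
    using inner_unit_decomposition[OF \<xi>, of w v] by (simp add: a_def \<alpha>_def c_def distrib_left)
  moreover have "\<alpha> * c \<le> \<bar>\<alpha>\<bar> * (b * p)"
  proof -
    have "\<alpha> * c \<le> \<bar>\<alpha>\<bar> * \<bar>c\<bar>"
      by (simp flip: abs_mult)
    also have "\<dots> \<le> \<bar>\<alpha>\<bar> * (b * p)"
      unfolding b_def p_def c_def by (intro mult_left_mono Cauchy_Schwarz_ineq2) simp
    finally show ?thesis .
  qed
  moreover have "\<bar>\<alpha>\<bar> * (b * p) \<le> \<alpha>\<^sup>2 * b\<^sup>2 / \<eta> + \<eta> * p\<^sup>2 / 4"
  proof -
    have amgm: "x * y \<le> x\<^sup>2 / \<eta> + \<eta> * y\<^sup>2 / 4" for x y :: real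
    proof -
      have "0 \<le> (x - \<eta> * y / 2)\<^sup>2"
        by simp
      then show ?thesis
        using \<eta> by (simp add: field_simps power2_eq_square)
    qed
    show ?thesis
      using amgm[of "\<bar>\<alpha>\<bar> * b" p] by (simp add: power_mult_distrib mult.assoc)
  qed
  moreover have "\<alpha> * (a * \<alpha>) \<le> \<alpha>\<^sup>2 * (\<eta> - b\<^sup>2 / \<eta>)"
    using mult_left_mono[OF contact, of "\<alpha>\<^sup>2"] by (simp add: a_def b_def power2_eq_square mult_ac)
  moreover have "\<alpha>\<^sup>2 * (\<eta> - b\<^sup>2 / \<eta>) + (\<alpha>\<^sup>2 * b\<^sup>2 / \<eta> + \<eta> * p\<^sup>2 / 4) \<le> \<eta> * (norm v)\<^sup>2"
    using \<eta> norm_unit_decomposition[OF \<xi>, of v] by (simp add: \<alpha>_def p_def algebra_simps)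
  ultimately show ?thesis
    by linarith
qed

lemma contact_ineq_if_form_bound:
  fixes \<xi> w :: "'a::real_inner"
  assumes \<xi>: "norm \<xi> = 1" and \<eta>: "0 < \<eta>"
    and form_bound: "\<And>v. (\<xi> \<bullet> v) * (w \<bullet> v) \<le> \<eta> / 4 * (norm v)\<^sup>2"
  shows "\<xi> \<bullet> w \<le> - ((norm (w - (\<xi> \<bullet> w) *\<^sub>R \<xi>))\<^sup>2 / \<eta>) + \<eta>"
proof -
  define a b where "a = \<xi> \<bullet> w" and "b = w - a *\<^sub>R \<xi>"
  define v where "v = \<xi> + (2 / \<eta>) *\<^sub>R b"
  have \<xi>b: "\<xi> \<bullet> b = 0" and \<xi>\<xi>: "\<xi> \<bullet> \<xi> = 1"
    using \<xi> by (simp_all add: b_def a_def inner_diff_right norm_eq_1)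
  have "\<xi> \<bullet> v = 1"
    using \<xi>b \<xi>\<xi> by (simp add: v_def inner_add_right)
  moreover have "w \<bullet> v = a + 2 * (norm b)\<^sup>2 / \<eta>"
    using inner_unit_decomposition[OF \<xi>, of w v] \<xi>b \<xi>\<xi>
    by (simp add: v_def a_def[symmetric] b_def[symmetric] inner_add_right power2_norm_eq_inner)
  moreover have "(norm v)\<^sup>2 = 1 + 4 * (norm b)\<^sup>2 / \<eta>\<^sup>2"
    using norm_unit_decomposition[OF \<xi>, of v] \<open>\<xi> \<bullet> v = 1\<close> by (simp add: v_def power_divide)
  moreover have "\<eta> / 4 * (1 + 4 * (norm b)\<^sup>2 / \<eta>\<^sup>2) = \<eta> / 4 + (norm b)\<^sup>2 / \<eta>"
    using \<eta> by (simp add: field_simps power2_eq_square)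
  ultimately have "a + 2 * (norm b)\<^sup>2 / \<eta> \<le> \<eta> / 4 + (norm b)\<^sup>2 / \<eta>"
    using form_bound[of v] by simp
  then show ?thesis
    using \<eta> by (simp add: a_def[symmetric] b_def[symmetric])
qed

lemma mat_le_sym_prod_if_contact_ineq:
  fixes \<xi> w :: "real^'m"
  assumes "norm \<xi> = 1" "0 < \<eta>" "\<xi> \<bullet> w \<le> - ((norm (perp \<xi> *v w))\<^sup>2 / \<eta>) + \<eta>"
  shows "mat_le (sym_prod \<xi> w) (\<eta> *\<^sub>R mat 1)"
  unfolding mat_le_def sym_prod_quadratic_form
proof
  fix v :: "real^'m"
  have "(\<xi> \<bullet> v) * (w \<bullet> v) \<le> \<eta> * (norm v)\<^sup>2"
    using assms by (intro form_bound_if_contact_ineq) (simp_all add: perp_mult_vector)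
  then show "(\<xi> \<bullet> v) * (w \<bullet> v) \<le> v \<bullet> ((\<eta> *\<^sub>R mat 1) *v v)"
    by (simp flip: scaleR_matrix_vector_assoc add: power2_norm_eq_inner)
qed

lemma contact_ineq_if_mat_le_sym_prod:
  fixes \<xi> w :: "real^'m" and A :: "real^'m^'m"
  assumes \<xi>: "norm \<xi> = 1" and le: "mat_le (sym_prod \<xi> w) (s *\<^sub>R A)"
    and s: "0 < s" and \<tau>: "0 < \<tau>" "4 * norm A \<le> \<tau>"
  shows "\<xi> \<bullet> w \<le> - ((norm (perp \<xi> *v w))\<^sup>2 / (\<tau> * s)) + \<tau> * s"
proof -
  have "(\<xi> \<bullet> v) * (w \<bullet> v) \<le> \<tau> * s / 4 * (norm v)\<^sup>2" for v
  proof -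
    have "(\<xi> \<bullet> v) * (w \<bullet> v) \<le> v \<bullet> ((s *\<^sub>R A) *v v)"
      using le by (simp add: mat_le_def sym_prod_quadratic_form)
    also have "\<dots> = s * (v \<bullet> (A *v v))"
      by (simp flip: scaleR_matrix_vector_assoc)
    also have "\<dots> \<le> s * (norm A * (norm v)\<^sup>2)"
      using s by (intro mult_left_mono quadratic_form_le_norm) simp
    also have "\<dots> \<le> s * (\<tau> / 4 * (norm v)\<^sup>2)"
      using s \<tau>(2) by (intro mult_left_mono mult_right_mono) auto
    also have "\<dots> = \<tau> * s / 4 * (norm v)\<^sup>2"
      by simp
    finally show ?thesis .
  qed
  then show ?thesis
    using contact_ineq_if_form_bound[OF \<xi>, of "\<tau> * s" w] s \<tau>(1) by (simp add: perp_mult_vector)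
qed

definition smooth_modulus :: "(real \<Rightarrow> real) \<Rightarrow> bool" where
  "smooth_modulus \<sigma> \<longleftrightarrow> strict_mono_on {0<..} \<sigma> \<and>
     (\<exists>\<sigma>'. continuous_on {0<..} \<sigma>' \<and> (\<forall>t>0. (\<sigma> has_real_derivative \<sigma>' t) (at t))) \<and>
     (\<sigma> \<longlongrightarrow> 0) (at_right 0)"

locale bounded_vanishing_family =
  fixes d r :: "'a \<Rightarrow> real" and Z :: "'a set" and B :: real
  assumes radius_pos: "\<And>z. z \<in> Z \<Longrightarrow> 0 < r z"
    and d_nonneg: "\<And>z. z \<in> Z \<Longrightarrow> 0 \<le> d z"
    and d_le_bound: "\<And>z. z \<in> Z \<Longrightarrow> d z \<le> B"
    and bound_nonneg: "0 \<le> B"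
    and d_vanishing: "\<And>\<epsilon>. 0 < \<epsilon> \<Longrightarrow> \<exists>\<rho>>0. \<forall>z\<in>Z. r z < \<rho> \<longrightarrow> d z < \<epsilon>"
begin

definition ramp :: "'a \<Rightarrow> real \<Rightarrow> real" where
  "ramp z t = d z * min 1 (max 0 t / r z)"

definition envelope :: "real \<Rightarrow> real" where
  "envelope t = Sup (insert 0 ((\<lambda>z. ramp z t) ` Z))"

lemma ramp_le_d: "z \<in> Z \<Longrightarrow> ramp z t \<le> d z"
  using radius_pos[of z] d_nonneg[of z] by (simp add: ramp_def mult_left_le)

lemma ramp_le_bound: "z \<in> Z \<Longrightarrow> ramp z t \<le> B"
  using ramp_le_d d_le_bound by (rule order_trans)

lemma bdd_above_ramps: "bdd_above (insert 0 ((\<lambda>z. ramp z t) ` Z))"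
  using ramp_le_bound bound_nonneg by (auto intro!: bdd_aboveI[where M = B])

lemma ramp_le_envelope: "z \<in> Z \<Longrightarrow> ramp z t \<le> envelope t"
  unfolding envelope_def by (rule cSup_upper) (use bdd_above_ramps in auto)

lemma envelope_nonneg: "0 \<le> envelope t"
  unfolding envelope_def by (rule cSup_upper) (use bdd_above_ramps in auto)

lemma envelope_least: "0 \<le> c \<Longrightarrow> (\<And>z. z \<in> Z \<Longrightarrow> ramp z t \<le> c) \<Longrightarrow> envelope t \<le> c"
  unfolding envelope_def by (rule cSup_least) auto

lemma envelope_le_bound: "envelope t \<le> B"
  by (rule envelope_least[OF bound_nonneg ramp_le_bound])

lemma d_le_envelope: "z \<in> Z \<Longrightarrow> r z \<le> t \<Longrightarrow> d z \<le> envelope t"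
  using ramp_le_envelope[of z t] radius_pos[of z] by (simp add: ramp_def)

lemma envelope_mono: "t \<le> t' \<Longrightarrow> envelope t \<le> envelope t'"
proof (rule envelope_least[OF envelope_nonneg])
  fix z assume "t \<le> t'" "z \<in> Z"
  then have "ramp z t \<le> ramp z t'"
    using radius_pos[of z] d_nonneg[of z] unfolding ramp_def
    by (intro mult_left_mono min.mono divide_right_mono) auto
  also have "\<dots> \<le> envelope t'"
    using \<open>z \<in> Z\<close> by (rule ramp_le_envelope)
  finally show "ramp z t \<le> envelope t'" .
qed

lemma envelope_le_ratio: "0 < t \<Longrightarrow> t \<le> t' \<Longrightarrow> envelope t' \<le> t' / t * envelope t"
proof (rule envelope_least)
  assume t: "0 < t" "t \<le> t'"
  then show "0 \<le> t' / t * envelope t"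
    using envelope_nonneg by simp
  fix z assume z: "z \<in> Z"
  have "ramp z t' = d z * min 1 (t' / r z)"
    using t by (simp add: ramp_def)
  also have "\<dots> \<le> d z * (t' / t * min 1 (t / r z))"
    using t radius_pos[OF z] d_nonneg[OF z]
    by (intro mult_left_mono) (auto simp: min_def field_simps)
  also have "\<dots> = t' / t * ramp z t"
    using t by (simp add: ramp_def)
  also have "\<dots> \<le> t' / t * envelope t"
    using t by (intro mult_left_mono ramp_le_envelope z) auto
  finally show "ramp z t' \<le> t' / t * envelope t" .
qed

lemma envelope_lipschitz:
  assumes c: "0 < c"
  shows "(B / c)-lipschitz_on {c..} envelope"
proof (rule lipschitz_onI)
  have increment: "dist (envelope t') (envelope t) \<le> B / c * dist t' t" if "c \<le> t" "t \<le> t'" for t t'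
  proof -
    have "envelope t' - envelope t \<le> (t' / t - 1) * envelope t"
      using envelope_le_ratio[of t t'] that c by (simp add: algebra_simps)
    also have "\<dots> \<le> (t' / t - 1) * B"
      using that c envelope_le_bound by (intro mult_left_mono) auto
    also have "\<dots> = B * (t' - t) / t"
      using that c by (simp add: field_simps)
    also have "\<dots> \<le> B * (t' - t) / c"
      using that c bound_nonneg by (intro divide_left_mono) auto
    finally have "envelope t' - envelope t \<le> B / c * (t' - t)"
      by simp
    moreover have "envelope t \<le> envelope t'"
      using that(2) by (rule envelope_mono)
    ultimately show ?thesis
      using that(2) by (simp add: dist_real_def)
  qed
  fix s t assume "s \<in> {c..}" "t \<in> {c..}"
  then show "dist (envelope s) (envelope t) \<le> B / c * dist s t"
    using increment[of s t] increment[of t s] by (metis atLeast_iff dist_commute linorder_le_cases)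
qed (use bound_nonneg c in simp)

lemma envelope_zero: "envelope 0 = 0"
  using envelope_nonneg[of 0] envelope_least[of 0 0] by (simp add: ramp_def)

lemma envelope_le_affine:
  assumes "0 < \<epsilon>"
  obtains \<rho> where "0 < \<rho>" "\<And>t. 0 \<le> t \<Longrightarrow> envelope t \<le> \<epsilon> + B / \<rho> * t"
proof -
  obtain \<rho> where \<rho>: "0 < \<rho>" "\<And>z. z \<in> Z \<Longrightarrow> r z < \<rho> \<Longrightarrow> d z < \<epsilon>"
    using d_vanishing[OF assms] by blast
  have "envelope t \<le> \<epsilon> + B / \<rho> * t" if t: "0 \<le> t" for t
  proof (rule envelope_least)
    show "0 \<le> \<epsilon> + B / \<rho> * t"
      using assms \<rho>(1) t bound_nonneg by simp
    fix z assume z: "z \<in> Z"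
    show "ramp z t \<le> \<epsilon> + B / \<rho> * t"
    proof (cases "r z < \<rho>")
      case True
      moreover have "0 \<le> B / \<rho> * t"
        using \<rho>(1) t bound_nonneg by simp
      ultimately show ?thesis
        using ramp_le_d[OF z, of t] \<rho>(2)[OF z] by linarith
    next
      case False
      have "ramp z t \<le> B * (t / r z)"
        using t d_le_bound[OF z] d_nonneg[OF z] radius_pos[OF z] unfolding ramp_def
        by (intro mult_mono) auto
      also have "\<dots> \<le> B * (t / \<rho>)"
        using False t \<rho>(1) bound_nonneg by (intro mult_left_mono divide_left_mono) auto
      finally show ?thesis
        using assms by simp
    qed
  qed
  with \<rho>(1) show thesis
    by (rule that)
qed

lemma envelope_tendsto_zero: "(envelope \<longlongrightarrow> 0) (at_right 0)"
proof (rule tendstoI)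
  fix e :: real assume e: "0 < e"
  obtain \<rho> where \<rho>: "0 < \<rho>" "\<And>t. 0 \<le> t \<Longrightarrow> envelope t \<le> e / 2 + B / \<rho> * t"
    using envelope_le_affine[of "e / 2"] e by auto
  have lim: "((\<lambda>t. B / \<rho> * t) \<longlongrightarrow> B / \<rho> * 0) (at_right 0)"
    by (intro tendsto_mult_left tendsto_ident_at)
  have "\<forall>\<^sub>F t in at_right 0. B / \<rho> * t < e / 2"
    using order_tendstoD(2)[OF lim, of "e / 2"] e by simp
  then show "\<forall>\<^sub>F t in at_right 0. dist (envelope t) 0 < e"
    using eventually_at_right_less[of 0]
  proof eventually_elim
    case (elim t)
    then have "envelope t < e"
      using \<rho>(2)[of t] by linarith
    then show ?case
      using envelope_nonneg[of t] by (simp add: dist_real_def)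
  qed
qed

lemma envelope_continuous_on: "continuous_on {0..} envelope"
  unfolding continuous_on_eq_continuous_within
proof
  fix t :: real assume "t \<in> {0..}"
  show "continuous (at t within {0..}) envelope"
  proof (cases "t = 0")
    case True
    then show ?thesis
      using envelope_tendsto_zero by (simp add: continuous_within at_within_Ici_at_right envelope_zero)
  next
    case False
    with \<open>t \<in> {0..}\<close> have "0 < t / 2"
      by simp
    then have "continuous_on {t / 2..} envelope"
      by (rule lipschitz_on_continuous_on[OF envelope_lipschitz])
    then have "isCont envelope t"
      by (rule continuous_on_interior) (use \<open>0 < t / 2\<close> in simp)
    then show ?thesis
      by (rule continuous_at_imp_continuous_at_within)
  qed
qed

definition envelope_primitive :: "real \<Rightarrow> real" where
  "envelope_primitive t = integral {0..t} envelope"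

lemma envelope_integrable_on: "0 \<le> a \<Longrightarrow> envelope integrable_on {a..b}"
  by (intro integrable_continuous_real continuous_on_subset[OF envelope_continuous_on]) auto

lemma envelope_primitive_has_derivative:
  assumes "0 < t"
  shows "(envelope_primitive has_real_derivative envelope t) (at t)"
proof -
  have "continuous_on {0..t + 1} envelope"
    by (rule continuous_on_subset[OF envelope_continuous_on]) auto
  then have "(envelope_primitive has_real_derivative envelope t) (at t within {0..t + 1})"
    using assms unfolding envelope_primitive_def[abs_def] by (intro integral_has_real_derivative) auto
  moreover have "at t within {0..t + 1} = at t"
    using assms by (intro at_within_Icc_at) auto
  ultimately show ?thesis
    by simp
qed

lemma envelope_primitive_nonneg: "0 \<le> envelope_primitive t"
  unfolding envelope_primitive_def
  by (rule integral_nonneg[OF envelope_integrable_on]) (auto simp: envelope_nonneg)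

lemma envelope_primitive_le: "0 \<le> t \<Longrightarrow> envelope_primitive t \<le> t * envelope t"
  using integral_le[OF envelope_integrable_on[of 0 t] integrable_const_ivl[of "envelope t" 0 t]]
  by (simp add: envelope_primitive_def envelope_mono)

lemma envelope_le_primitive_double:
  assumes "0 < t"
  shows "t * envelope t \<le> envelope_primitive (2 * t)"
proof -
  have "t * envelope t = integral {t..2 * t} (\<lambda>_. envelope t)"
    using assms by simp
  also have "\<dots> \<le> integral {t..2 * t} envelope"
    using assms by (intro integral_le envelope_integrable_on) (auto intro: envelope_mono)
  also have "\<dots> \<le> integral {0..t} envelope + integral {t..2 * t} envelope"
    using envelope_primitive_nonneg[of t] by (simp add: envelope_primitive_def)
  also have "\<dots> = envelope_primitive (2 * t)"
    unfolding envelope_primitive_def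
    by (rule Henstock_Kurzweil_Integration.integral_combine) (use assms envelope_integrable_on in auto)
  finally show ?thesis .
qed

definition majorant :: "real \<Rightarrow> real" where
  "majorant t = envelope_primitive (2 * t) / t + t"

definition majorant_deriv :: "real \<Rightarrow> real" where
  "majorant_deriv t = (2 * t * envelope (2 * t) - envelope_primitive (2 * t)) / t\<^sup>2 + 1"

lemma majorant_has_derivative:
  assumes "0 < t"
  shows "(majorant has_real_derivative majorant_deriv t) (at t)"
proof -
  have "((\<lambda>s. envelope_primitive (2 * s)) has_real_derivative envelope (2 * t) * 2) (at t)"
    using assms by (intro DERIV_chain2[OF envelope_primitive_has_derivative]) (auto intro!: derivative_eq_intros)
  then show ?thesis
    unfolding majorant_def[abs_def] majorant_deriv_def using assms
    by (auto intro!: derivative_eq_intros simp: field_simps power2_eq_square)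
qed

lemma majorant_deriv_pos: "0 < t \<Longrightarrow> 0 < majorant_deriv t"
  using envelope_primitive_le[of "2 * t"] unfolding majorant_deriv_def
  by (intro add_nonneg_pos divide_nonneg_nonneg) auto

lemma majorant_deriv_continuous_on: "continuous_on {0<..} majorant_deriv"
proof -
  have "continuous_on {0<..} envelope_primitive"
    by (rule continuous_at_imp_continuous_on) (auto intro: DERIV_isCont envelope_primitive_has_derivative)
  moreover have "continuous_on {0<..} envelope"
    by (rule continuous_on_subset[OF envelope_continuous_on]) auto
  ultimately show ?thesis
    unfolding majorant_deriv_def
    by (intro continuous_intros continuous_on_compose2[where f = "\<lambda>t. 2 * t"]) auto
qed

lemma majorant_strict_mono: "strict_mono_on {0<..} majorant"
proof (rule strict_mono_onI)
  fix s t :: real assume "s \<in> {0<..}" "s < t"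
  show "majorant s < majorant t"
  proof (rule DERIV_pos_imp_increasing[OF \<open>s < t\<close>])
    fix x assume "s \<le> x"
    with \<open>s \<in> {0<..}\<close> have "0 < x"
      by simp
    then show "\<exists>y. (majorant has_real_derivative y) (at x) \<and> 0 < y"
      using majorant_has_derivative majorant_deriv_pos by blast
  qed

qed

lemma majorant_tendsto_zero: "(majorant \<longlongrightarrow> 0) (at_right 0)"
proof -
  have "filterlim (\<lambda>t. 2 * t) (at_right 0) (at_right (0::real))"
    using eventually_at_right_less[of 0]
    by (auto simp: filterlim_at elim: eventually_mono intro!: tendsto_eq_intros)
  then have upper_lim: "((\<lambda>t. 2 * envelope (2 * t) + t) \<longlongrightarrow> 0) (at_right 0)"
    using tendsto_add[OF tendsto_mult_right_zero[OF filterlim_compose[OF envelope_tendsto_zero]] tendsto_ident_at]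
    by simp
  have bounds: "\<forall>\<^sub>F t in at_right 0. 0 \<le> majorant t \<and> majorant t \<le> 2 * envelope (2 * t) + t"
    using eventually_at_right_less[of 0]
  proof eventually_elim
    case (elim t)
    then have "envelope_primitive (2 * t) / t \<le> 2 * envelope (2 * t)"
      using envelope_primitive_le[of "2 * t"] by (simp add: pos_divide_le_eq mult_ac)
    then show ?case
      using elim envelope_primitive_nonneg[of "2 * t"] by (simp add: majorant_def)
  qed
  show ?thesis
    by (rule tendsto_sandwich[OF eventually_mono[OF bounds] eventually_mono[OF bounds] tendsto_const upper_lim])
      simp_all
qed

lemma d_le_majorant: "z \<in> Z \<Longrightarrow> d z \<le> majorant (r z)"
proof -
  assume z: "z \<in> Z"
  have "d z \<le> envelope (r z)"
    using z by (rule d_le_envelope) simp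
  also have "\<dots> \<le> envelope_primitive (2 * r z) / r z"
    using envelope_le_primitive_double[OF radius_pos[OF z]] radius_pos[OF z] by (simp add: field_simps)
  also have "\<dots> \<le> majorant (r z)"
    using radius_pos[OF z] by (simp add: majorant_def)
  finally show ?thesis .
qed

lemma smooth_modulus_majorant: "smooth_modulus majorant"
  unfolding smooth_modulus_def
  using majorant_strict_mono majorant_deriv_continuous_on majorant_has_derivative majorant_tendsto_zero
  by blast

end

lemma smooth_modulus_pos:
  assumes "smooth_modulus \<sigma>" "0 < t"
  shows "0 < \<sigma> t"
proof -
  have mono: "strict_mono_on {0<..} \<sigma>" and lim: "(\<sigma> \<longlongrightarrow> 0) (at_right 0)"
    using assms(1) by (simp_all add: smooth_modulus_def)
  have "\<forall>\<^sub>F s in at_right 0. \<sigma> s \<le> \<sigma> (t / 2)"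
    unfolding eventually_at_right_field using mono assms(2)
    by (intro exI[of _ "t / 2"]) (auto simp: strict_mono_on_def less_imp_le)
  then have "0 \<le> \<sigma> (t / 2)"
    by (rule tendsto_upperbound[OF lim]) simp
  also have "\<sigma> (t / 2) < \<sigma> t"
    using mono assms(2) by (simp add: strict_mono_on_def)
  finally show ?thesis .
qed

lemma smooth_modulus_above_vanishing:
  fixes g :: "'a::real_normed_vector \<Rightarrow> real"
  assumes "(g \<longlongrightarrow> 0) (at 0)"
  obtains \<sigma> where "smooth_modulus \<sigma>" "\<forall>\<^sub>F y in at 0. g y \<le> \<sigma> (norm y)"
proof -
  obtain R where R: "0 < R" "\<And>y. y \<noteq> 0 \<Longrightarrow> norm y < R \<Longrightarrow> \<bar>g y\<bar> < 1"
    using tendstoD[OF assms, of 1] by (auto simp: eventually_at dist_norm)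
  define Z :: "'a set" where "Z = {y. y \<noteq> 0 \<and> norm y < R}"
  interpret bounded_vanishing_family "\<lambda>y. \<bar>g y\<bar>" norm Z 1
  proof
    fix \<epsilon> :: real assume "0 < \<epsilon>"
    then show "\<exists>\<rho>>0. \<forall>z\<in>Z. norm z < \<rho> \<longrightarrow> \<bar>g z\<bar> < \<epsilon>"
      using tendstoD[OF assms \<open>0 < \<epsilon>\<close>] by (auto simp: eventually_at dist_norm Z_def)
  qed (use R in \<open>auto simp: Z_def less_imp_le\<close>)
  have "\<forall>\<^sub>F y in at 0. y \<in> Z"
    using R(1) by (auto simp: eventually_at Z_def dist_norm)
  then have "\<forall>\<^sub>F y in at 0. g y \<le> majorant (norm y)"
    by (rule eventually_mono) (use d_le_majorant in fastforce)
  with smooth_modulus_majorant show thesis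
    by (rule that)
qed

lemma filterlim_norm_at_0: "filterlim norm (at_right 0) (at (0 :: 'a::real_normed_vector))"
  unfolding filterlim_at
  by (auto simp: eventually_at intro!: exI[of _ 1] tendsto_norm_zero)

lemma contact_ineq_if_jet1:
  fixes u :: "real^'n \<Rightarrow> real^'m"
  assumes \<xi>: "norm \<xi> = 1" and "P \<in> jet1 \<xi> u x"
  obtains \<sigma> where "smooth_modulus \<sigma>"
    "\<forall>\<^sub>F z in at 0.
       \<xi> \<bullet> (u (z + x) - u x - P *v z)
         \<le> - ((norm (perp \<xi> *v (u (z + x) - u x - P *v z)))\<^sup>2 / (\<sigma> (norm z) * norm z))
           + \<sigma> (norm z) * norm z"
proof -
  obtain T :: "real^'n \<Rightarrow> real^'m^'m" where T: "(T \<longlongrightarrow> 0) (at 0)"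
    and jet: "\<forall>\<^sub>F z in at x. mat_le (sym_prod \<xi> (u z - u x - P *v (z - x))) (norm (z - x) *\<^sub>R T (z - x))"
    using assms(2) unfolding jet1_def by blast
  have "((\<lambda>y. 4 * norm (T y)) \<longlongrightarrow> 0) (at 0)"
    using tendsto_mult_right_zero[OF tendsto_norm_zero[OF T], of 4] by (simp add: mult.commute)
  then obtain \<sigma> where \<sigma>: "smooth_modulus \<sigma>" and above: "\<forall>\<^sub>F y in at 0. 4 * norm (T y) \<le> \<sigma> (norm y)"
    by (rule smooth_modulus_above_vanishing)
  have jet0: "\<forall>\<^sub>F z in at 0. mat_le (sym_prod \<xi> (u (z + x) - u x - P *v z)) (norm z *\<^sub>R T z)"
    using jet unfolding at_to_0[of x] eventually_filtermap by simp
  have "\<forall>\<^sub>F z :: real^'n in at 0. z \<noteq> 0"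
    by (simp add: eventually_at_filter)
  with jet0 above have "\<forall>\<^sub>F z in at 0.
       \<xi> \<bullet> (u (z + x) - u x - P *v z)
         \<le> - ((norm (perp \<xi> *v (u (z + x) - u x - P *v z)))\<^sup>2 / (\<sigma> (norm z) * norm z))
           + \<sigma> (norm z) * norm z"
    by eventually_elim (use contact_ineq_if_mat_le_sym_prod[OF \<xi>] smooth_modulus_pos[OF \<sigma>] in simp)
  with \<sigma> show thesis
    by (rule that)
qed

lemma jet1_if_contact_ineq:
  fixes u :: "real^'n \<Rightarrow> real^'m"
  assumes \<xi>: "norm \<xi> = 1" and \<sigma>: "smooth_modulus \<sigma>"
    and contact: "\<forall>\<^sub>F z in at 0.
       \<xi> \<bullet> (u (z + x) - u x - P *v z)
         \<le> - ((norm (perp \<xi> *v (u (z + x) - u x - P *v z)))\<^sup>2 / (\<sigma> (norm z) * norm z))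
           + \<sigma> (norm z) * norm z"
  shows "P \<in> jet1 \<xi> u x"
proof -
  define T where "T y = \<sigma> (norm y) *\<^sub>R (mat 1 :: real^'m^'m)" for y :: "real^'n"
  have "continuous_on {0<..} \<sigma>"
    using \<sigma> unfolding smooth_modulus_def
    by (metis DERIV_isCont continuous_at_imp_continuous_on greaterThan_iff)
  then have "continuous_on (UNIV - {0}) (\<lambda>y :: real^'n. \<sigma> (norm y))"
    by (rule continuous_on_compose2) (auto intro: continuous_on_norm_id)
  then have cont: "continuous_on (UNIV - {0}) T"
    unfolding T_def by (intro continuous_intros)
  have "((\<lambda>y :: real^'n. \<sigma> (norm y)) \<longlongrightarrow> 0) (at 0)"
    using \<sigma> filterlim_norm_at_0 unfolding smooth_modulus_def by (blast intro: filterlim_compose)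
  then have lim: "(T \<longlongrightarrow> 0) (at 0)"
    unfolding T_def using tendsto_scaleR[OF _ tendsto_const] by fastforce
  have "\<forall>\<^sub>F z :: real^'n in at 0. z \<noteq> 0"
    by (simp add: eventually_at_filter)
  with contact have "\<forall>\<^sub>F z in at 0. mat_le (sym_prod \<xi> (u (z + x) - u x - P *v z)) (norm z *\<^sub>R T z)"
  proof eventually_elim
    case (elim z)
    then have "mat_le (sym_prod \<xi> (u (z + x) - u x - P *v z)) ((\<sigma> (norm z) * norm z) *\<^sub>R mat 1)"
      using smooth_modulus_pos[OF \<sigma>] by (intro mat_le_sym_prod_if_contact_ineq[OF \<xi>]) simp_all
    then show ?case
      by (simp add: T_def mult.commute)
  qed
  then have "\<forall>\<^sub>F z in at x. mat_le (sym_prod \<xi> (u z - u x - P *v (z - x))) (norm (z - x) *\<^sub>R T (z - x))"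
    unfolding at_to_0[of x] eventually_filtermap by simp
  moreover have "\<forall>y. y \<noteq> 0 \<longrightarrow> transpose (T y) = T y"
    by (simp add: T_def transpose_scalar)
  ultimately show ?thesis
    unfolding jet1_def using cont lim by blast
qed

theorem theorem26:
  fixes \<Omega> :: "(real^'n) set" and u :: "real^'n \<Rightarrow> real^'m"
    and x :: "real^'n" and \<xi> :: "real^'m" and P :: "real^'n^'m"
  assumes "open \<Omega>" and "continuous_on \<Omega> u" and "x \<in> \<Omega>" and "norm \<xi> = 1"
  shows "P \<in> jet1 \<xi> u x \<longleftrightarrow>
    (\<exists>\<sigma> :: real \<Rightarrow> real.
       strict_mono_on {0<..} \<sigma> \<and>
       (\<exists>\<sigma>'. continuous_on {0<..} \<sigma>' \<and> (\<forall>t>0. (\<sigma> has_real_derivative \<sigma>' t) (at t))) \<and>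
       (\<sigma> \<longlongrightarrow> 0) (at_right 0) \<and>
       (\<forall>\<^sub>F z in at 0.
          \<xi> \<bullet> (u (z + x) - u x - P *v z)
            \<le> - ((norm (perp \<xi> *v (u (z + x) - u x - P *v z)))\<^sup>2 / (\<sigma> (norm z) * norm z))
              + \<sigma> (norm z) * norm z))"
  (is "_ \<longleftrightarrow> ?contact")
proof
  assume "P \<in> jet1 \<xi> u x"
  with assms(4) obtain \<sigma> where "smooth_modulus \<sigma>"
    "\<forall>\<^sub>F z in at 0.
       \<xi> \<bullet> (u (z + x) - u x - P *v z)
         \<le> - ((norm (perp \<xi> *v (u (z + x) - u x - P *v z)))\<^sup>2 / (\<sigma> (norm z) * norm z))
           + \<sigma> (norm z) * norm z"
    by (rule contact_ineq_if_jet1)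
  then show ?contact
    unfolding smooth_modulus_def by blast
next
  assume ?contact
  then show "P \<in> jet1 \<xi> u x"
    using jet1_if_contact_ineq[OF assms(4)] unfolding smooth_modulus_def by blast
qed

end
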